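(* Consider a two-player matrix game between a player $\mathrm{SV}$ (the group of surrounding vehicles) and a player $\mathrm{EV}$ (the ego vehicle). Player $\mathrm{SV}$ has exactly two actions $\pi_{\mathrm{SV}}^1$ (``Assert'') and $\pi_{\mathrm{SV}}^2$ (``Yield''); player $\mathrm{EV}$ has finitely many actions $\pi_{\mathrm{EV}}^1,\dots,\pi_{\mathrm{EV}}^{M_{\mathrm{EV}}}$. For each $i\in\{1,2\}$ and $m\in\{1,\dots,M_{\mathrm{EV}}\}$ let $J_{\mathrm{SV}}^{im}$ and $J_{\mathrm{EV}}^{im}$ be real numbers (the costs of $\mathrm{SV}$ and $\mathrm{EV}$ under the action tuple $(\pi_{\mathrm{SV}}^i,\pi_{\mathrm{EV}}^m)$). Let $b(\pi_{\mathrm{SV}}^1), b(\pi_{\mathrm{SV}}^2)\in[0,1]$ with $b(\pi_{\mathrm{SV}}^1)+b(\pi_{\mathrm{SV}}^2)=1$, and define the modified cost of $\mathrm{SV}$ by $\bar J_{\mathrm{SV}}^{im}:=(1-b(\pi_{\mathrm{SV}}^i))J_{\mathrm{SV}}^{im}$; the cost of $\mathrm{EV}$ is $J_{\mathrm{EV}}^{im}$. Assume that the inequalities $0\le J_{\mathrm{SV}}^{1m}\le J_{\mathrm{SV}}^{2m}$ and $J_{\mathrm{EV}}^{1m}\ge J_{\mathrm{EV}}^{2m}\ge 0$ hold for all $m\in\{1,\dots,M_{\mathrm{EV}}\}$ (for all feasible action tuples). If $b(\pi_{\mathrm{SV}}^1)\ge 0.5$, then there exists $p\in\{1,\dots,M_{\mathrm{EV}}\}$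 such that the action tuple $(\pi_{\mathrm{SV}}^1,\pi_{\mathrm{EV}}^p)$ is a pure-strategy Nash equilibrium, i.e. $\bar J_{\mathrm{SV}}^{1p}\le \bar J_{\mathrm{SV}}^{2p}$ and $J_{\mathrm{EV}}^{1p}\le J_{\mathrm{EV}}^{1m}$ for all $m\in\{1,\dots,M_{\mathrm{EV}}\}$.
   Context: An action tuple is called feasible if the corresponding simulated multi-vehicle trajectories are collision-free; it is assumed that at least one feasible action tuple exists. A pure-strategy Nash equilibrium is an action tuple from which no player can lower its own cost (modified cost $\bar J_{\mathrm{SV}}$ for $\mathrm{SV}$, $J_{\mathrm{EV}}$ for $\mathrm{EV}$) by unilaterally changing its action. The number $b(\pi_{\mathrm{SV}}^i)$ is the belief that the surrounding vehicles take action $\pi_{\mathrm{SV}}^i$. *)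

theory Defs
  imports Main "HOL.Real"
begin

text \<open>SV actions are indexed by i in {1,2} (1 = Assert, 2 = Yield);
EV actions by m in {1..M}. JSV i m, JEV i m are the costs under (pi_SV^i, pi_EV^m);
b i is the belief that SV takes action pi_SV^i.\<close>

definition modified_cost_SV :: "(nat \<Rightarrow> real) \<Rightarrow> (nat \<Rightarrow> nat \<Rightarrow> real) \<Rightarrow> nat \<Rightarrow> nat \<Rightarrow> real" where
  "modified_cost_SV b JSV i m = (1 - b i) * JSV i m"

definition pure_nash :: "nat \<Rightarrow> (nat \<Rightarrow> nat \<Rightarrow> real) \<Rightarrow> (nat \<Rightarrow> nat \<Rightarrow> real) \<Rightarrow> nat \<Rightarrow> nat \<Rightarrow> bool" where
  "pure_nash M JSVbar JEV i p \<longleftrightarrow>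
     i \<in> {1,2} \<and> p \<in> {1..M} \<and>
     (\<forall>i'\<in>{1,2}. JSVbar i p \<le> JSVbar i' p) \<and>
     (\<forall>m\<in>{1..M}. JEV i p \<le> JEV i m)"

end

theory Submission
  imports Defs
begin

text \<open>Against Assert, EV best-responds by minimising its cost over its finitely many actions.
Assert is in turn a best response of SV to every EV action: when b 1 \<ge> 1/2 the weight
1 - b 1 of Assert is at most the weight 1 - b 2 = b 1 of Yield, and the raw cost of Assert
is the smaller one.\<close>

lemma complement_weight_le_weight:
  fixes \<beta> x y :: real
  assumes "1/2 \<le> \<beta>" and "0 \<le> x" and "x \<le> y"
  shows "(1 - \<beta>) * x \<le> \<beta> * y"
proof -
  have "(1 - \<beta>) * x \<le> \<beta> * x" using assms by (intro mult_right_mono) auto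
  also have "\<dots> \<le> \<beta> * y" using assms by (intro mult_left_mono) auto
  finally show ?thesis .
qed

lemma modified_cost_SV_assert_le_yield:
  assumes "b 1 + b 2 = 1" and "1/2 \<le> b 1"
    and "0 \<le> JSV 1 m" and "JSV 1 m \<le> JSV 2 m"
  shows "modified_cost_SV b JSV 1 m \<le> modified_cost_SV b JSV 2 m"
proof -
  have "1 - b 2 = b 1" using assms(1) by simp
  then show ?thesis
    using complement_weight_le_weight[OF assms(2-4)] by (simp add: modified_cost_SV_def)
qed

lemma pure_nash_1_iff:
  "pure_nash M JSVbar JEV 1 p \<longleftrightarrow>
     p \<in> {1..M} \<and> JSVbar 1 p \<le> JSVbar 2 p \<and> (\<forall>m\<in>{1..M}. JEV 1 p \<le> JEV 1 m)"
  by (auto simp: pure_nash_def)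

theorem proposition1:
  fixes M :: nat and JSV JEV :: "nat \<Rightarrow> nat \<Rightarrow> real" and b :: "nat \<Rightarrow> real"
  assumes "M \<ge> 1"
    and "0 \<le> b 1" and "b 1 \<le> 1" and "0 \<le> b 2" and "b 2 \<le> 1" and "b 1 + b 2 = 1"
    and "\<forall>m\<in>{1..M}. 0 \<le> JSV 1 m \<and> JSV 1 m \<le> JSV 2 m"
    and "\<forall>m\<in>{1..M}. JEV 1 m \<ge> JEV 2 m \<and> JEV 2 m \<ge> 0"
    and "b 1 \<ge> 1/2"
  shows "\<exists>p\<in>{1..M}. pure_nash M (modified_cost_SV b JSV) JEV 1 p"
proof
  define p where "p = arg_min_on (JEV 1) {1..M}"
  have actions: "finite {1..M}" "{1..M} \<noteq> {}" using assms(1) by auto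
  show p_action: "p \<in> {1..M}"
    unfolding p_def using arg_min_if_finite(1)[OF actions] .
  have EV_best: "\<forall>m\<in>{1..M}. JEV 1 p \<le> JEV 1 m"
    unfolding p_def using arg_min_least[OF actions] by blast
  have SV_best: "modified_cost_SV b JSV 1 p \<le> modified_cost_SV b JSV 2 p"
    using assms(6,7,9) p_action by (intro modified_cost_SV_assert_le_yield) auto
  show "pure_nash M (modified_cost_SV b JSV) JEV 1 p"
    unfolding pure_nash_1_iff using p_action SV_best EV_best by blast
qed

end
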